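(* Let $s\ge3$ and let $S$ be a sequence over an alphabet of $n$ symbols, written as a concatenation of $m$ blocks, containing no alternation of length $s+2$. Let $2\le\hat m<m$ and partition the blocks of $S$ into $\hat m$ consecutive intervals $S_1S_2\cdots S_{\hat m}$, where $S_q$ consists of $m_q\ge1$ blocks ($\sum_q m_q=m$). For each $q$ let $\check n_q$ be the number of symbols occurring in $S_q$ and in no other interval, and let $\hat n=n-\sum_q\check n_q$. Then \[ |S|\le \sum_{q=1}^{\hat m}\lambda_s(\check n_q,m_q)+2\lambda_{s-1}(\hat n,m)+\lambda_{s-2}\big(\lambda_s(\hat n,\hat m)-2\hat n,\,m\big). \] Consequently $\lambda_s(n,m)$ is at most the maximum of the right-hand side over all nonnegative integers $\hat n,\check n_1,\dots,\check n_{\hat m}$ summing to $n$.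
   Context: For $s\ge1$, a sequence contains an alternation of length $s+2$ if there are distinct symbols $a\ne b$ and indices $i_1<\dots<i_{s+2}$ whose entries are alternately $a,b,a,b,\dots$. A block is a sequence of pairwise distinct symbols. $\lambda_s(n,m)$ is the maximum length of a sequence using at most $n$ distinct symbols that contains no alternation of length $s+2$ and can be written as a concatenation of at most $m$ blocks; by convention $\lambda_s(0,m)=0$. *)

theory Defs
  imports Main
begin

definition has_alternation :: "nat \<Rightarrow> 'a list \<Rightarrow> bool" where
  "has_alternation k S \<longleftrightarrow>
     (\<exists>a b (i :: nat \<Rightarrow> nat). a \<noteq> b \<and>
        (\<forall>j<k. i j < length S) \<and>
        (\<forall>j. Suc j < k \<longrightarrow> i j < i (Suc j)) \<and>
        (\<forall>j<k. S ! (i j) = (if even j then a else b)))"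

definition is_block :: "'a list \<Rightarrow> bool" where
  "is_block b \<longleftrightarrow> distinct b"

definition at_most_blocks :: "nat \<Rightarrow> 'a list \<Rightarrow> bool" where
  "at_most_blocks m S \<longleftrightarrow>
     (\<exists>bs. length bs \<le> m \<and> concat bs = S \<and> (\<forall>b\<in>set bs. is_block b))"

text \<open>The set of
admissible lengths is nonempty (empty sequence) and bounded by n*m, so the
supremum is a maximum; for n = 0 it is 0.\<close>
definition lambda_s :: "nat \<Rightarrow> nat \<Rightarrow> nat \<Rightarrow> nat" where
  "lambda_s s n m = Sup {length S | S :: nat list.
       card (set S) \<le> n \<and> \<not> has_alternation (s + 2) S \<and> at_most_blocks m S}"

end

theory Submission
  imports Defs "HOL-Library.Sublist"
begin

(* Tag every occurrence of a symbol x in interval q as the pair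
   (x, q).  A symbol is local if it occurs in one interval only, global otherwise; the
   occurrences of a global symbol are split into those in its first interval, in its
   last interval, and in the intervals strictly between.  The four classes are bounded
   separately:
   - local occurrences form, interval by interval, sequences of the same kind
     (lambda_s(nc_q, m_q) each);
   - the first-interval (last-interval) occurrences contain no alternation of length s+1:
     an alternation of length >= 3 among them lies in a single interval and can be
     extended by a later (earlier) occurrence of one of its symbols;
   - the middle occurrences, read as a sequence over tagged pairs, contain no alternation
     of length s, as such an alternation extends on both sides; the number of distinct
     middle pairs is bounded via the contracted sequence that keeps each global symbol
     once per interval, which gives lambda_s(nh, mh) - 2 nh. *)

section \<open>Alternations as subsequences\<close>

fun alternating :: "'a \<Rightarrow> 'a \<Rightarrow> nat \<Rightarrow> 'a list" where
  "alternating a b 0 = []"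
| "alternating a b (Suc k) = a # alternating b a k"

lemma length_alternating [simp]: "length (alternating a b k) = k"
  by (induction k arbitrary: a b) auto

lemma nth_alternating: "j < k \<Longrightarrow> alternating a b k ! j = (if even j then a else b)"
  by (induction k arbitrary: a b j) (auto simp: nth_Cons split: nat.splits)

lemma alternating_snoc: "alternating a b k @ [if even k then a else b] = alternating a b (Suc k)"
  by (induction k arbitrary: a b) auto

lemma map_alternating: "map f (alternating a b k) = alternating (f a) (f b) k"
  by (induction k arbitrary: a b) auto

lemma set_alternating_subset: "set (alternating a b k) \<subseteq> {a, b}"
  by (induction k arbitrary: a b) auto

lemma set_alternating: "2 \<le> k \<Longrightarrow> set (alternating a b k) = {a, b}"
proof -
  assume "2 \<le> k"
  then obtain r where "k = Suc (Suc r)" by (metis add_2_eq_Suc le_Suc_ex)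
  then show ?thesis using set_alternating_subset[of a b r] by auto
qed

lemma increasing_on_prefix:
  fixes i :: "nat \<Rightarrow> nat"
  assumes "\<forall>j. Suc j < k \<longrightarrow> i j < i (Suc j)" "j < l" "l < k"
  shows "i j < i l"
  using assms(2,3)
proof (induction l)
  case (Suc l)
  then show ?case using assms(1) by (cases "j = l") auto
qed simp

lemma subseq_obtain_indices:
  assumes "subseq xs ys"
  shows "\<exists>i :: nat \<Rightarrow> nat. (\<forall>j<length xs. i j < length ys) \<and>
    (\<forall>j. Suc j < length xs \<longrightarrow> i j < i (Suc j)) \<and> (\<forall>j<length xs. ys ! i j = xs ! j)"
  using assms
proof (induction rule: list_emb.induct)
  case (list_emb_Nil ys)
  then show ?case by simp
next
  case (list_emb_Cons xs ys y)
  then obtain i where "\<forall>j<length xs. i j < length ys" "\<forall>j. Suc j < length xs \<longrightarrow> i j < i (Suc j)"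
    "\<forall>j<length xs. ys ! i j = xs ! j" by blast
  then show ?case by (intro exI[of _ "\<lambda>j. Suc (i j)"]) auto
next
  case (list_emb_Cons2 x y xs ys)
  then obtain i where i: "\<forall>j<length xs. i j < length ys" "\<forall>j. Suc j < length xs \<longrightarrow> i j < i (Suc j)"
    "\<forall>j<length xs. ys ! i j = xs ! j" by blast
  show ?case
  proof (intro exI[of _ "\<lambda>j. case j of 0 \<Rightarrow> 0 | Suc j \<Rightarrow> Suc (i j)"] conjI allI impI)
    fix j
    show "j < length (x # xs) \<Longrightarrow> (case j of 0 \<Rightarrow> 0 | Suc j \<Rightarrow> Suc (i j)) < length (y # ys)"
      using i(1) by (cases j) auto
    show "Suc j < length (x # xs) \<Longrightarrow>
        (case j of 0 \<Rightarrow> 0 | Suc j \<Rightarrow> Suc (i j)) < (case Suc j of 0 \<Rightarrow> 0 | Suc j \<Rightarrow> Suc (i j))"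
      using i(2) by (cases j) auto
    show "j < length (x # xs) \<Longrightarrow> (y # ys) ! (case j of 0 \<Rightarrow> 0 | Suc j \<Rightarrow> Suc (i j)) = (x # xs) ! j"
      using i(3) list_emb_Cons2.hyps(1) by (cases j) auto
  qed
qed

lemma subseq_of_indices:
  fixes i :: "nat \<Rightarrow> nat"
  assumes "\<forall>j<k. i j < length ys" "\<forall>j. Suc j < k \<longrightarrow> i j < i (Suc j)"
  shows "subseq (map (\<lambda>j. ys ! i j) [0..<k]) ys"
  using assms
proof (induction k arbitrary: ys)
  case (Suc k)
  let ?ys' = "take (i k) ys"
  have below: "i j < i k" if "j < k" for j
    using increasing_on_prefix[OF Suc.prems(2) that] by simp
  have "subseq (map (\<lambda>j. ?ys' ! i j) [0..<k]) ?ys'"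
    using Suc.prems below by (intro Suc.IH) auto
  moreover have "map (\<lambda>j. ?ys' ! i j) [0..<k] = map (\<lambda>j. ys ! i j) [0..<k]"
    using below by simp
  ultimately have "subseq (map (\<lambda>j. ys ! i j) [0..<k] @ [ys ! i k]) (?ys' @ ys ! i k # drop (Suc (i k)) ys)"
    by (intro list_emb_append_mono) auto
  then show ?case using id_take_nth_drop[of "i k" ys] Suc.prems(1) by simp
qed simp

lemma set_subseq: "subseq xs ys \<Longrightarrow> set xs \<subseteq> set ys"
  by (induction rule: list_emb.induct) auto

lemma has_alternation_iff_subseq:
  "has_alternation k S \<longleftrightarrow> (\<exists>a b. a \<noteq> b \<and> subseq (alternating a b k) S)"
proof
  assume "has_alternation k S"
  then obtain a b and i :: "nat \<Rightarrow> nat" where ab: "a \<noteq> b" and i: "\<forall>j<k. i j < length S"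
    "\<forall>j. Suc j < k \<longrightarrow> i j < i (Suc j)" "\<forall>j<k. S ! i j = (if even j then a else b)"
    unfolding has_alternation_def by blast
  have "alternating a b k = map (\<lambda>j. S ! i j) [0..<k]"
    using i(3) by (intro nth_equalityI) (auto simp: nth_alternating)
  then show "\<exists>a b. a \<noteq> b \<and> subseq (alternating a b k) S"
    using ab subseq_of_indices[OF i(1,2)] by metis
next
  assume "\<exists>a b. a \<noteq> b \<and> subseq (alternating a b k) S"
  then obtain a b where "a \<noteq> b" "subseq (alternating a b k) S" by blast
  moreover obtain i :: "nat \<Rightarrow> nat" where "\<forall>j<k. i j < length S"
    "\<forall>j. Suc j < k \<longrightarrow> i j < i (Suc j)" "\<forall>j<k. S ! i j = alternating a b k ! j"
    using subseq_obtain_indices[OF \<open>subseq (alternating a b k) S\<close>] by auto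
  ultimately show "has_alternation k S"
    unfolding has_alternation_def by (metis nth_alternating)
qed

lemma has_alternation_subseq:
  "has_alternation k T \<Longrightarrow> subseq T S \<Longrightarrow> has_alternation k S"
  unfolding has_alternation_iff_subseq by (meson subseq_order.trans)

lemma has_alternation_map_inj:
  assumes alt: "has_alternation k (map f S)" and inj: "inj_on f (set S)" and k: "2 \<le> k"
  shows "has_alternation k S"
proof -
  obtain a b and i :: "nat \<Rightarrow> nat" where ab: "a \<noteq> b" and i: "\<forall>j<k. i j < length S"
    "\<forall>j. Suc j < k \<longrightarrow> i j < i (Suc j)" "\<forall>j<k. f (S ! i j) = (if even j then a else b)"
    using alt unfolding has_alternation_def by auto
  have "S ! i j = (if even j then S ! i 0 else S ! i 1)" if "j < k" for j
    using i(1,3) k that by (intro inj_onD[OF inj]) auto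
  moreover have "f (S ! i 0) \<noteq> f (S ! i 1)" using ab i(3) k by auto
  then have "S ! i 0 \<noteq> S ! i 1" by metis
  ultimately show ?thesis using i(1,2) unfolding has_alternation_def by blast
qed

lemma subseq_of_map:
  "subseq xs (map f ys) \<Longrightarrow> \<exists>zs. subseq zs ys \<and> xs = map f zs"
proof (induction ys arbitrary: xs)
  case (Cons y ys)
  show ?case
  proof (cases "xs \<noteq> [] \<and> hd xs = f y")
    case True
    then obtain xs' where xs: "xs = f y # xs'" by (cases xs) auto
    then obtain zs where "subseq zs ys" "xs' = map f zs" using Cons by auto
    then show ?thesis using xs by (intro exI[of _ "y # zs"]) auto
  next
    case False
    then have "subseq xs (map f ys)" using Cons.prems by (cases xs) auto
    then obtain zs where "subseq zs ys" "xs = map f zs" using Cons.IH by blast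
    then show ?thesis by (intro exI[of _ zs]) auto
  qed
qed auto

lemma subseq_alternating_graph:
  assumes "subseq (alternating a b k) (map fst ps)" "\<forall>p\<in>set ps. snd p = \<tau> (fst p)"
  shows "subseq (alternating (a, \<tau> a) (b, \<tau> b) k) ps"
proof -
  obtain L where L: "subseq L ps" "alternating a b k = map fst L"
    using subseq_of_map[OF assms(1)] by blast
  have "set L \<subseteq> set ps" using L(1) by (rule set_subseq)
  then have "L = map (\<lambda>x. (x, \<tau> x)) (map fst L)"
    using assms(2) by (force intro!: map_idI[symmetric])
  then show ?thesis using L by (metis map_alternating)
qed

section \<open>Blocks and the extremal function lambda_s\<close>

lemma at_most_blocks_map_filter:
  assumes "length bs \<le> m" "\<forall>b\<in>set bs. distinct (map f b)"
  shows "at_most_blocks m (map f (filter P (concat bs)))"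
  unfolding at_most_blocks_def is_block_def
proof (intro exI[of _ "map (\<lambda>b. map f (filter P b)) bs"] conjI ballI)
  show "concat (map (\<lambda>b. map f (filter P b)) bs) = map f (filter P (concat bs))"
    by (simp add: filter_concat map_concat comp_def)
qed (use assms distinct_map_filter in auto)

(* Empty blocks may be added, so at most m blocks can be taken to be exactly m blocks. *)
lemma at_most_blocks_exactly:
  assumes "at_most_blocks m S"
  obtains bs where "length bs = m" "concat bs = S" "\<forall>b\<in>set bs. distinct b"
proof -
  obtain bs where bs: "length bs \<le> m" "concat bs = S" "\<forall>b\<in>set bs. distinct b"
    using assms unfolding at_most_blocks_def is_block_def by blast
  show ?thesis
    using bs by (intro that[of "bs @ replicate (m - length bs) []"]) auto
qed

lemma length_le_blocks_card:
  assumes "at_most_blocks m S"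
  shows "length S \<le> m * card (set S)"
proof -
  obtain bs where bs: "length bs \<le> m" "concat bs = S" "\<forall>b\<in>set bs. distinct b"
    using assms unfolding at_most_blocks_def is_block_def by blast
  have "length b \<le> card (set S)" if "b \<in> set bs" for b
  proof -
    have "length b = card (set b)" using bs(3) that by (simp add: distinct_card)
    also have "\<dots> \<le> card (set S)" using that bs(2) by (intro card_mono) auto
    finally show ?thesis .
  qed
  then have "length S \<le> length bs * card (set S)"
    using bs(2)[symmetric] sum_list_mono[of bs length "\<lambda>_. card (set S)"]
    by (simp add: length_concat sum_list_triv)
  also have "\<dots> \<le> m * card (set S)" using bs(1) by simp
  finally show ?thesis .
qed

(* The lengths admitted in the definition of lambda_s form a finite nonempty set
   (bounded by m * n), so lambda_s is a maximum. *)
lemma lambda_s_candidates: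
  fixes s n m :: nat
  defines "X \<equiv> {length S |S :: nat list.
     card (set S) \<le> n \<and> \<not> has_alternation (s + 2) S \<and> at_most_blocks m S}"
  shows "finite X" "X \<noteq> {}" "lambda_s s n m = Max X"
proof -
  have "X \<subseteq> {..m * n}"
    using length_le_blocks_card unfolding X_def by (force intro: order.trans)
  then show fin: "finite X" by (rule finite_subset) simp
  have "at_most_blocks m ([] :: nat list)" unfolding at_most_blocks_def by (intro exI[of _ "[]"]) auto
  moreover have "\<not> has_alternation (s + 2) ([] :: nat list)" unfolding has_alternation_def by auto
  ultimately have "0 \<in> X" unfolding X_def by force
  then show ne: "X \<noteq> {}" by blast
  show "lambda_s s n m = Max X" unfolding lambda_s_def X_def[symmetric] using fin ne by (rule cSup_eq_Max)
qed

lemma lambda_s_attained: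
  obtains S :: "nat list" where "card (set S) \<le> n" "\<not> has_alternation (s + 2) S"
    "at_most_blocks m S" "length S = lambda_s s n m"
proof -
  have "lambda_s s n m \<in> {length S |S :: nat list.
     card (set S) \<le> n \<and> \<not> has_alternation (s + 2) S \<and> at_most_blocks m S}"
    unfolding lambda_s_candidates(3) by (intro Max_in lambda_s_candidates(1,2))
  then show ?thesis using that by auto
qed

(* lambda_s bounds admissible sequences over any alphabet type, by renaming into nat. *)
lemma length_le_lambda_s:
  fixes S :: "'b list"
  assumes card: "card (set S) \<le> n" and noalt: "\<not> has_alternation (s + 2) S"
    and blocks: "at_most_blocks m S"
  shows "length S \<le> lambda_s s n m"
proof -
  obtain f :: "'b \<Rightarrow> nat" where inj: "inj_on f (set S)"
    using finite_imp_inj_to_nat_seg[of "set S"] by auto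
  obtain bs where bs: "length bs \<le> m" "concat bs = S" "\<forall>b\<in>set bs. distinct b"
    using blocks unfolding at_most_blocks_def is_block_def by blast
  have "\<forall>b\<in>set bs. distinct (map f b)"
    using bs inj by (auto simp: distinct_map intro: inj_on_subset)
  then have "at_most_blocks m (map f S)"
    using at_most_blocks_map_filter[OF bs(1), of f "\<lambda>_. True"] bs(2) by simp
  moreover have "card (set (map f S)) \<le> n" using card inj by (simp add: card_image)
  moreover have "\<not> has_alternation (s + 2) (map f S)"
    using noalt has_alternation_map_inj[OF _ inj] by auto
  ultimately have "length (map f S) \<in> {length S |S :: nat list.
     card (set S) \<le> n \<and> \<not> has_alternation (s + 2) S \<and> at_most_blocks m S}"
    unfolding mem_Collect_eq by (intro exI[of _ "map f S"]) simp
  then show ?thesis using Max_ge[OF lambda_s_candidates(1)] lambda_s_candidates(3) by simp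
qed

lemma no_inner_occurrence:
  assumes "c \<notin> set T" "d \<noteq> c"
  shows "\<not> subseq [d, c, d] (c # T @ [c])"
proof
  assume "subseq [d, c, d] (c # T @ [c])"
  then have "subseq [d, c, d] (T @ [c])" using assms(2) by simp
  then obtain xs ys where split: "[d, c, d] = xs @ ys" "subseq xs T" "subseq ys [c]"
    by (rule subseq_appendE)
  have "ys = [] \<or> ys = [c]" using split(3) by (cases ys) (auto split: if_splits dest: list_emb_Nil2)
  then have "c \<in> set xs" using split(1) assms(2) by auto
  then show False using set_subseq[OF split(2)] assms(1) by blast
qed

lemma has_alternation_unwrap:
  assumes c: "c \<notin> set T" and k: "4 \<le> k" and alt: "has_alternation k (c # T @ [c])"
  shows "has_alternation k T"
proof -
  obtain a b where ab: "a \<noteq> b" and sub: "subseq (alternating a b k) (c # T @ [c])"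
    using alt unfolding has_alternation_iff_subseq by blast
  define r where "r = k - 4"
  have "k = Suc (Suc (Suc (Suc r)))" unfolding r_def using k by simp
  then have "subseq [a, b, a] (alternating a b k) \<and> subseq [b, a, b] (alternating a b k)"
    using ab by simp
  then have "c \<noteq> a \<and> c \<noteq> b"
    using no_inner_occurrence[OF c] ab sub by (metis subseq_order.trans)
  then have "filter (\<lambda>z. z \<noteq> c) (alternating a b k) = alternating a b k"
    using set_alternating_subset[of a b k] by (auto intro: filter_True)
  moreover have "filter (\<lambda>z. z \<noteq> c) (c # T @ [c]) = T"
    using c by (auto simp: filter_id_conv)
  ultimately have "subseq (alternating a b k) T"
    using subseq_filter[OF sub, of "\<lambda>z. z \<noteq> c"] by simp
  then show ?thesis using ab unfolding has_alternation_iff_subseq by blast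
qed

(* Putting a fresh symbol at the front of the first and the end of the last block adds
   one symbol and two letters. *)
lemma lambda_s_Suc:
  assumes m: "2 \<le> m" and s: "2 \<le> s"
  shows "lambda_s s n m + 2 \<le> lambda_s s (Suc n) m"
proof -
  obtain S :: "nat list" where S: "card (set S) \<le> n" "\<not> has_alternation (s + 2) S"
    "at_most_blocks m S" "length S = lambda_s s n m"
    by (rule lambda_s_attained)
  obtain c :: nat where c: "c \<notin> set S" using ex_new_if_finite[OF infinite_UNIV_nat] by blast
  obtain bs where bs: "length bs = m" "concat bs = S" "\<forall>b\<in>set bs. distinct b"
    using at_most_blocks_exactly[OF S(3)] by blast
  obtain b1 rest where rest: "bs = b1 # rest" using bs(1) m by (cases bs) auto
  then obtain mid bl where bs_eq: "bs = b1 # mid @ [bl]" using bs(1) m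
    by (cases rest rule: rev_cases) auto
  have "at_most_blocks m (c # S @ [c])" unfolding at_most_blocks_def is_block_def
    using bs bs_eq c by (intro exI[of _ "(c # b1) # mid @ [bl @ [c]]"]) auto
  moreover have "card (set (c # S @ [c])) \<le> Suc n" using S(1) c by (simp add: card_insert_if)
  moreover have "\<not> has_alternation (s + 2) (c # S @ [c])"
    using has_alternation_unwrap[OF c] S(2) s by auto
  ultimately have "length (c # S @ [c]) \<le> lambda_s s (Suc n) m" by (rule length_le_lambda_s[rotated 2])
  then show ?thesis using S(4) by simp
qed

lemma lambda_s_add_symbols:
  assumes "2 \<le> m" "2 \<le> s"
  shows "lambda_s s n m + 2 * d \<le> lambda_s s (n + d) m"
proof (induction d)
  case (Suc d)
  then show ?case using lambda_s_Suc[OF assms, of "n + d"] by simp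
qed simp

lemma concat_map_concat: "concat (map concat xss) = concat (concat xss)"
  by (induction xss) auto

lemma subseq_concat_member: "xs \<in> set xss \<Longrightarrow> subseq xs (concat xss)"
  by (metis split_list concat_append concat.simps(2) subseq_drop_many subseq_rev_drop_many
      subseq_order.refl)

lemma subseq_concat_map:
  "(\<And>x. x \<in> set xs \<Longrightarrow> subseq (f x) (g x)) \<Longrightarrow> subseq (concat (map f xs)) (concat (map g xs))"
  by (induction xs) (auto intro: list_emb_append_mono)

lemma subseq_remdups: "subseq (remdups xs) xs"
  by (induction xs) auto

lemma length_filter_remdups: "length (filter P (remdups xs)) = card {x \<in> set xs. P x}"
  by (metis distinct_card distinct_filter distinct_remdups set_filter set_remdups)

lemma length_le_filters4:
  assumes "\<forall>p\<in>set xs. P1 p \<or> P2 p \<or> P3 p \<or> P4 p"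
  shows "length xs \<le> length (filter P1 xs) + length (filter P2 xs) + length (filter P3 xs)
    + length (filter P4 xs)"
  using assms by (induction xs) auto

lemma sorted_subseq: "subseq xs ys \<Longrightarrow> sorted ys \<Longrightarrow> sorted xs"
  by (metis subseq_conv_nths sorted_nths)

lemma sorted_key_split:
  fixes f :: "'a \<Rightarrow> 'b :: linorder"
  assumes "sorted (map f xs)"
  shows "xs = filter (\<lambda>p. f p < q) xs @ filter (\<lambda>p. f p = q) xs @ filter (\<lambda>p. q < f p) xs"
  using assms
proof (induction xs)
  case (Cons x xs)
  then have IH: "xs = filter (\<lambda>p. f p < q) xs @ filter (\<lambda>p. f p = q) xs @ filter (\<lambda>p. q < f p) xs"
    and above: "\<forall>y\<in>set xs. f x \<le> f y" by auto
  consider "f x < q" | "f x = q" | "q < f x" using less_linear by blast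
  then show ?case
  proof cases
    case 2
    then have "filter (\<lambda>p. f p < q) xs = []" using above by (auto simp: filter_empty_conv)
    then show ?thesis using IH 2 by simp
  next
    case 3
    then have "filter (\<lambda>p. f p < q) xs = []" "filter (\<lambda>p. f p = q) xs = []"
      using above by (auto simp: filter_empty_conv)
    then show ?thesis using IH 3 by simp
  qed (use IH in auto)
qed simp

lemma subseq_sorted_key_sandwich:
  fixes f :: "'a \<Rightarrow> 'b :: linorder"
  assumes sorted: "sorted (map f xs)"
    and sub: "subseq P xs" "subseq L xs" "subseq R xs"
    and keys: "\<forall>p\<in>set P. f p < q" "\<forall>p\<in>set L. f p = q" "\<forall>p\<in>set R. q < f p"
  shows "subseq (P @ L @ R) xs"
proof -
  have "subseq P (filter (\<lambda>p. f p < q) xs)"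
    using subseq_filter[OF sub(1), of "\<lambda>p. f p < q"] keys(1) by (simp add: filter_id_conv)
  moreover have "subseq L (filter (\<lambda>p. f p = q) xs)"
    using subseq_filter[OF sub(2), of "\<lambda>p. f p = q"] keys(2) by (simp add: filter_id_conv)
  moreover have "subseq R (filter (\<lambda>p. q < f p) xs)"
    using subseq_filter[OF sub(3), of "\<lambda>p. q < f p"] keys(3) by (simp add: filter_id_conv)
  ultimately have "subseq (P @ L @ R)
      (filter (\<lambda>p. f p < q) xs @ filter (\<lambda>p. f p = q) xs @ filter (\<lambda>p. q < f p) xs)"
    by (intro list_emb_append_mono)
  then show ?thesis using sorted_key_split[OF sorted] by simp
qed

lemma sorted_tags_concat:
  "sorted (map snd (concat (map (\<lambda>q. map (\<lambda>x. (x, q)) (xs q)) [0..<k])))"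
proof (induction k)
  case (Suc k)
  have "map snd (map (\<lambda>x. (x, k)) (xs k)) = replicate (length (xs k)) k"
    by (simp add: comp_def map_replicate_const)
  then show ?case using Suc by (auto simp: sorted_append)
qed simp

section \<open>The interval decomposition\<close>

(* A sequence given as a list of intervals, each interval a list of blocks. *)
locale interval_partition =
  fixes Bs :: "'a list list list"
  assumes blocks: "\<forall>I\<in>set Bs. \<forall>b\<in>set I. is_block b"
begin

abbreviation seq :: "'a list" where
  "seq \<equiv> concat (concat Bs)"

definition interval :: "nat \<Rightarrow> 'a list" where
  "interval q = concat (Bs ! q)"

definition tagged_blocks :: "('a \<times> nat) list list" where
  "tagged_blocks = concat (map (\<lambda>q. map (map (\<lambda>x. (x, q))) (Bs ! q)) [0..<length Bs])"

definition tagged :: "('a \<times> nat) list" where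
  "tagged = concat tagged_blocks"

lemma tagged_eq: "tagged = concat (map (\<lambda>q. map (\<lambda>x. (x, q)) (interval q)) [0..<length Bs])"
  unfolding tagged_def tagged_blocks_def interval_def
  by (simp add: map_concat concat_map_concat[symmetric] comp_def)

lemma concat_intervals: "concat (map interval [0..<length Bs]) = seq"
proof -
  have "map interval [0..<length Bs] = map concat Bs"
    unfolding interval_def by (rule nth_equalityI) auto
  then show ?thesis by (simp add: concat_map_concat)
qed

lemma map_fst_tagged: "map fst tagged = seq"
  unfolding tagged_eq concat_intervals[symmetric] by (simp add: map_concat comp_def)

lemma set_tagged: "(x, q) \<in> set tagged \<longleftrightarrow> q < length Bs \<and> x \<in> set (interval q)"
  unfolding tagged_eq by auto

lemma length_tagged: "length tagged = length seq"
  using arg_cong[OF map_fst_tagged, of length] by simp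

(* The tags increase along the sequence; this is what confines short alternations of
   tagged occurrences to one interval. *)
lemma sorted_tags: "sorted (map snd tagged)"
  unfolding tagged_eq by (rule sorted_tags_concat)

lemma length_tagged_blocks: "length tagged_blocks = (\<Sum>q<length Bs. length (Bs ! q))"
  unfolding tagged_blocks_def by (simp add: length_concat comp_def sum_list_sum_nth atLeast0LessThan)

lemma distinct_tagged_blocks: "b \<in> set tagged_blocks \<Longrightarrow> distinct (map fst b)"
  using blocks nth_mem unfolding tagged_blocks_def is_block_def by (fastforce simp: comp_def)

lemma subseq_interval: "q < length Bs \<Longrightarrow> subseq (interval q) seq"
  using subseq_concat_member[of "interval q" "map concat Bs"]
  unfolding interval_def concat_map_concat by simp

definition occurs_in :: "'a \<Rightarrow> nat set" where
  "occurs_in x = {q. q < length Bs \<and> x \<in> set (interval q)}"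

definition local_symbols :: "nat \<Rightarrow> 'a set" where
  "local_symbols q = {x. x \<in> set (interval q) \<and> (\<forall>r<length Bs. r \<noteq> q \<longrightarrow> x \<notin> set (interval r))}"

definition global_symbols :: "'a set" where
  "global_symbols = {x. \<exists>q\<in>occurs_in x. \<exists>r\<in>occurs_in x. q \<noteq> r}"

definition first_interval :: "'a \<Rightarrow> nat" where
  "first_interval x = Min (occurs_in x)"

definition last_interval :: "'a \<Rightarrow> nat" where
  "last_interval x = Max (occurs_in x)"

definition is_local :: "'a \<times> nat \<Rightarrow> bool" where
  "is_local p \<longleftrightarrow> fst p \<in> local_symbols (snd p)"

definition is_first :: "'a \<times> nat \<Rightarrow> bool" where
  "is_first p \<longleftrightarrow> fst p \<in> global_symbols \<and> snd p = first_interval (fst p)"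

definition is_last :: "'a \<times> nat \<Rightarrow> bool" where
  "is_last p \<longleftrightarrow> fst p \<in> global_symbols \<and> snd p = last_interval (fst p)"

definition is_middle :: "'a \<times> nat \<Rightarrow> bool" where
  "is_middle p \<longleftrightarrow> fst p \<in> global_symbols \<and>
     first_interval (fst p) < snd p \<and> snd p < last_interval (fst p)"

lemma finite_occurs_in: "finite (occurs_in x)"
  unfolding occurs_in_def by simp

lemma occurs_in_tagged: "q \<in> occurs_in x \<longleftrightarrow> (x, q) \<in> set tagged"
  unfolding occurs_in_def set_tagged by simp

lemma occurs_in_between:
  "q \<in> occurs_in x \<Longrightarrow> first_interval x \<le> q \<and> q \<le> last_interval x"
  unfolding first_interval_def last_interval_def using finite_occurs_in by simp

lemma occurs_in_symbol: "q \<in> occurs_in x \<Longrightarrow> x \<in> set seq"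
  unfolding occurs_in_def using set_subseq[OF subseq_interval] by blast

lemma global_symbols_subset: "global_symbols \<subseteq> set seq"
  unfolding global_symbols_def using occurs_in_symbol by blast

lemma finite_global_symbols: "finite global_symbols"
  using global_symbols_subset by (rule finite_subset) simp

lemma global_symbol_span:
  assumes "x \<in> global_symbols"
  shows "first_interval x < last_interval x"
    "(x, first_interval x) \<in> set tagged" "(x, last_interval x) \<in> set tagged"
proof -
  obtain q r where qr: "q \<in> occurs_in x" "r \<in> occurs_in x" "q \<noteq> r"
    using assms unfolding global_symbols_def by blast
  then show "first_interval x < last_interval x"
    using occurs_in_between[of q x] occurs_in_between[of r x] by linarith
  have "occurs_in x \<noteq> {}" using qr by blast
  then show "(x, first_interval x) \<in> set tagged" "(x, last_interval x) \<in> set tagged"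
    unfolding first_interval_def last_interval_def occurs_in_tagged[symmetric]
    using finite_occurs_in by simp_all
qed

lemma tagged_classified:
  assumes "p \<in> set tagged"
  shows "is_local p \<or> is_first p \<or> is_last p \<or> is_middle p"
proof (cases "is_local p")
  case False
  obtain x q where p: "p = (x, q)" by (cases p)
  then have q: "q \<in> occurs_in x" using assms occurs_in_tagged by simp
  then obtain r where "r \<in> occurs_in x" "r \<noteq> q"
    using False p unfolding is_local_def local_symbols_def occurs_in_def by auto
  then have "x \<in> global_symbols" using q unfolding global_symbols_def by blast
  then show ?thesis
    using occurs_in_between[OF q] p unfolding is_first_def is_last_def is_middle_def by force
qed simp

lemma tagged_alternation_one_interval:
  assumes "subseq (alternating p p' k) tagged" "3 \<le> k"
  shows "snd p = snd p'"
proof -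
  have "sorted (alternating (snd p) (snd p') k)"
    using sorted_subseq[OF subseq_map[OF assms(1)] sorted_tags] by (simp add: map_alternating)
  moreover have "k = Suc (Suc (Suc (k - 3)))" using assms(2) by simp
  ultimately have "sorted (snd p # snd p' # snd p # alternating (snd p') (snd p) (k - 3))"
    by (metis alternating.simps(2))
  then show ?thesis by simp
qed

lemma tagged_sandwich:
  assumes "subseq P tagged" "subseq L tagged" "subseq R tagged"
    "\<forall>p\<in>set P. snd p < q" "\<forall>p\<in>set L. snd p = q" "\<forall>p\<in>set R. q < snd p"
  shows "subseq (map fst P @ map fst L @ map fst R) (seq)"
  using subseq_map[OF subseq_sorted_key_sandwich[OF sorted_tags assms], of fst]
  unfolding map_fst_tagged by simp

(* The first-interval occurrences: an alternation extends by a later occurrence of its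
   last symbol. *)
lemma first_occurrences_alternation:
  assumes alt: "has_alternation k (map fst (filter is_first tagged))" and k: "3 \<le> k"
  shows "has_alternation (Suc k) (seq)"
proof -
  obtain a b where ab: "a \<noteq> b"
    and sub: "subseq (alternating a b k) (map fst (filter is_first tagged))"
    using alt unfolding has_alternation_iff_subseq by blast
  let ?L = "alternating (a, first_interval a) (b, first_interval b) k"
  have L: "subseq ?L (filter is_first tagged)"
    using sub by (rule subseq_alternating_graph) (simp add: is_first_def)
  then have L_tagged: "subseq ?L tagged" using subseq_filter_left subseq_order.trans by blast
  have set_L: "set ?L = {(a, first_interval a), (b, first_interval b)}"
    using k by (simp add: set_alternating)
  have global: "a \<in> global_symbols" "b \<in> global_symbols"
    using set_subseq[OF L] set_L by (auto simp: is_first_def)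
  define q where "q = first_interval a"
  have same: "first_interval b = q" using tagged_alternation_one_interval[OF L_tagged k] q_def by simp
  define z where "z = (if even k then a else b)"
  have z: "z \<in> global_symbols" "first_interval z = q" using global same unfolding z_def q_def by auto
  have "subseq (map fst ?L @ [z]) (seq)"
    using tagged_sandwich[of "[]" ?L "[(z, last_interval z)]" q]
      L_tagged global_symbol_span[OF z(1)] z(2) set_L same
    by (auto simp: subseq_singleton_left q_def)
  moreover have "map fst ?L @ [z] = alternating a b (Suc k)"
    by (simp add: map_alternating z_def alternating_snoc)
  ultimately show ?thesis using ab unfolding has_alternation_iff_subseq by metis
qed

(* The last-interval occurrences: an alternation extends by an earlier occurrence of its
   second symbol. *)
lemma last_occurrences_alternation:
  assumes alt: "has_alternation k (map fst (filter is_last tagged))" and k: "3 \<le> k"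
  shows "has_alternation (Suc k) (seq)"
proof -
  obtain a b where ab: "a \<noteq> b"
    and sub: "subseq (alternating a b k) (map fst (filter is_last tagged))"
    using alt unfolding has_alternation_iff_subseq by blast
  let ?L = "alternating (a, last_interval a) (b, last_interval b) k"
  have L: "subseq ?L (filter is_last tagged)"
    using sub by (rule subseq_alternating_graph) (simp add: is_last_def)
  then have L_tagged: "subseq ?L tagged" using subseq_filter_left subseq_order.trans by blast
  have set_L: "set ?L = {(a, last_interval a), (b, last_interval b)}"
    using k by (simp add: set_alternating)
  have global: "a \<in> global_symbols" "b \<in> global_symbols"
    using set_subseq[OF L] set_L by (auto simp: is_last_def)
  define q where "q = last_interval a"
  have same: "last_interval b = q" using tagged_alternation_one_interval[OF L_tagged k] q_def by simp
  have "subseq (b # map fst ?L) (seq)"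
    using tagged_sandwich[of "[(b, first_interval b)]" ?L "[]" q]
      L_tagged global_symbol_span[OF global(2)] set_L same
    by (auto simp: subseq_singleton_left q_def)
  moreover have "b # map fst ?L = alternating b a (Suc k)"
    by (simp add: map_alternating)
  ultimately show ?thesis using ab unfolding has_alternation_iff_subseq by metis
qed

(* The middle occurrences, as tagged pairs: an alternation extends on both sides. *)
lemma middle_occurrences_alternation:
  assumes alt: "has_alternation k (filter is_middle tagged)" and k: "3 \<le> k"
  shows "has_alternation (Suc (Suc k)) (seq)"
proof -
  obtain pa pb where pab: "pa \<noteq> pb" and L: "subseq (alternating pa pb k) (filter is_middle tagged)"
    using alt unfolding has_alternation_iff_subseq by blast
  then have L_tagged: "subseq (alternating pa pb k) tagged"
    using subseq_filter_left subseq_order.trans by blast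
  obtain a b q where pa: "pa = (a, q)" and pb: "pb = (b, q)"
    using tagged_alternation_one_interval[OF L_tagged k] by (metis prod.collapse)
  have ab: "a \<noteq> b" using pab pa pb by simp
  have set_L: "set (alternating pa pb k) = {pa, pb}" using k by (simp add: set_alternating)
  then have middle: "is_middle (a, q)" "is_middle (b, q)"
    using set_subseq[OF L] pa pb by auto
  define z where "z = (if even k then a else b)"
  have z: "is_middle (z, q)" using middle unfolding z_def by simp
  have "subseq (map fst [(b, first_interval b)] @ map fst (alternating pa pb k)
      @ map fst [(z, last_interval z)]) (seq)"
    using L_tagged middle(2) z set_L pa pb global_symbol_span
    by (intro tagged_sandwich[where q = q]) (auto simp: subseq_singleton_left is_middle_def)
  moreover have "map fst [(b, first_interval b)] @ map fst (alternating pa pb k)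
      @ map fst [(z, last_interval z)] = alternating b a (Suc (Suc k))"
    using alternating_snoc[of a b k] by (simp add: map_alternating pa pb z_def)
  ultimately show ?thesis using ab unfolding has_alternation_iff_subseq by metis
qed

lemma length_filter_local:
  "length (filter is_local tagged) =
     (\<Sum>q<length Bs. length (filter (\<lambda>x. x \<in> local_symbols q) (interval q)))"
  unfolding tagged_eq is_local_def
  by (simp add: filter_concat length_concat filter_map comp_def
      interv_sum_list_conv_sum_set_nat atLeast0LessThan)

(* The local occurrences in interval q form a sequence over local_symbols q made of the
   blocks of that interval. *)
lemma local_occurrences_bound:
  assumes noalt: "\<not> has_alternation (s + 2) seq"
  shows "length (filter is_local tagged) \<le>
     (\<Sum>q<length Bs. lambda_s s (card (local_symbols q)) (length (Bs ! q)))"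
  unfolding length_filter_local
proof (intro sum_mono length_le_lambda_s)
  fix q assume q: "q \<in> {..<length Bs}"
  let ?T = "filter (\<lambda>x. x \<in> local_symbols q) (interval q)"
  show "card (set ?T) \<le> card (local_symbols q)"
    by (intro card_mono) (auto simp: local_symbols_def)
  show "\<not> has_alternation (s + 2) ?T"
    using noalt has_alternation_subseq subseq_interval[of q] q
    by (meson lessThan_iff subseq_filter_left subseq_order.trans)
  have "\<forall>b\<in>set (Bs ! q). distinct (map id b)"
    using blocks q nth_mem unfolding is_block_def by fastforce
  then show "at_most_blocks (length (Bs ! q)) ?T"
    using at_most_blocks_map_filter[of "Bs ! q" _ id] unfolding interval_def by simp
qed

(* Global symbols and the local symbols of the various intervals are pairwise disjoint. *)
lemma global_local_card:
  assumes "finite A" "set seq \<subseteq> A"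
  shows "card global_symbols + (\<Sum>q<length Bs. card (local_symbols q)) \<le> card A"
proof -
  have local_sub: "local_symbols q \<subseteq> set seq" if "q < length Bs" for q
    using occurs_in_symbol that unfolding local_symbols_def occurs_in_def by blast
  have fin: "finite (local_symbols q)" for q
    unfolding local_symbols_def by simp
  have "card (\<Union>q<length Bs. local_symbols q) = (\<Sum>q<length Bs. card (local_symbols q))"
    by (intro card_UN_disjoint) (auto simp: fin local_symbols_def)
  moreover have "global_symbols \<inter> (\<Union>q<length Bs. local_symbols q) = {}"
    unfolding global_symbols_def local_symbols_def occurs_in_def by blast
  ultimately have "card global_symbols + (\<Sum>q<length Bs. card (local_symbols q))
      = card (global_symbols \<union> (\<Union>q<length Bs. local_symbols q))"
    using fin finite_global_symbols by (simp add: card_Un_disjoint)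
  also have "\<dots> \<le> card A"
    using assms local_sub global_symbols_subset by (intro card_mono) blast+
  finally show ?thesis .
qed

lemma end_occurrences_bound:
  assumes P: "P = is_first \<or> P = is_last" and s: "3 \<le> s"
    and noalt: "\<not> has_alternation (s + 2) seq" and global: "card global_symbols \<le> nh"
  shows "length (filter P tagged) \<le> lambda_s (s - 1) nh (length tagged_blocks)"
proof -
  let ?T = "map fst (filter P tagged)"
  have "set ?T \<subseteq> global_symbols" using P by (auto simp: is_first_def is_last_def)
  then have "card (set ?T) \<le> nh"
    using global card_mono[OF finite_global_symbols] by (meson order.trans)
  moreover have "\<not> has_alternation (s - 1 + 2) ?T"
  proof
    assume "has_alternation (s - 1 + 2) ?T"
    moreover have "s - 1 + 2 = Suc s" "3 \<le> Suc s" using s by simp_all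
    ultimately have "has_alternation (Suc (Suc s)) seq"
      using P first_occurrences_alternation last_occurrences_alternation by auto
    then show False using noalt by simp
  qed
  moreover have "at_most_blocks (length tagged_blocks) ?T"
    using at_most_blocks_map_filter[OF order.refl] distinct_tagged_blocks unfolding tagged_def by blast
  ultimately show ?thesis using length_le_lambda_s[of ?T nh "s - 1"] by simp
qed

definition contracted :: "'a list" where
  "contracted = concat (map (\<lambda>q. filter (\<lambda>x. x \<in> global_symbols) (remdups (interval q)))
     [0..<length Bs])"

lemma subseq_contracted: "subseq contracted seq"
  unfolding contracted_def concat_intervals[symmetric]
  by (intro subseq_concat_map) (meson subseq_filter_left subseq_order.trans subseq_remdups)

lemma contracted_blocks: "at_most_blocks (length Bs) contracted"
  unfolding at_most_blocks_def is_block_def contracted_def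
  by (intro exI[of _ "map (\<lambda>q. filter (\<lambda>x. x \<in> global_symbols) (remdups (interval q)))
     [0..<length Bs]"]) auto

lemma set_contracted: "set contracted \<subseteq> global_symbols"
  unfolding contracted_def by auto

lemma length_contracted: "length contracted = (\<Sum>x\<in>global_symbols. card (occurs_in x))"
proof -
  have "length contracted = (\<Sum>q<length Bs. card {x\<in>global_symbols. x \<in> set (interval q)})"
    unfolding contracted_def
    by (simp add: length_concat comp_def interv_sum_list_conv_sum_set_nat atLeast0LessThan
        length_filter_remdups conj_commute)
  also have "\<dots> = (\<Sum>x\<in>global_symbols. card {q\<in>{..<length Bs}. x \<in> set (interval q)})"
    using sum.swap_restrict[OF finite_lessThan finite_global_symbols, of "\<lambda>_ _. 1::nat"
        "\<lambda>q x. x \<in> set (interval q)"] by simp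
  also have "\<dots> = (\<Sum>x\<in>global_symbols. card (occurs_in x))"
    unfolding occurs_in_def by simp
  finally show ?thesis .
qed

(* A global symbol x has card (occurs_in x) - 2 distinct middle occurrences. *)
lemma set_middle_occurrences:
  "set (filter is_middle tagged) =
     Sigma global_symbols (\<lambda>x. occurs_in x - {first_interval x, last_interval x})"
proof (intro set_eqI)
  fix p :: "'a \<times> nat"
  obtain x q where p: "p = (x, q)" by (cases p)
  show "p \<in> set (filter is_middle tagged) \<longleftrightarrow>
      p \<in> Sigma global_symbols (\<lambda>x. occurs_in x - {first_interval x, last_interval x})"
    using occurs_in_between[of q x] unfolding p is_middle_def by (auto simp: occurs_in_tagged)
qed

lemma card_middle_occurrences:
  "card (set (filter is_middle tagged)) + 2 * card global_symbols = length contracted"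
proof -
  have "card (occurs_in x - {first_interval x, last_interval x}) + 2 = card (occurs_in x)"
    if "x \<in> global_symbols" for x
  proof -
    have "{first_interval x, last_interval x} \<subseteq> occurs_in x"
      using global_symbol_span[OF that] occurs_in_tagged by simp
    moreover have "card {first_interval x, last_interval x} = 2"
      using global_symbol_span(1)[OF that] by simp
    ultimately show ?thesis
      using card_Diff_subset[OF _ \<open>{first_interval x, last_interval x} \<subseteq> occurs_in x\<close>]
        card_mono[OF finite_occurs_in \<open>{first_interval x, last_interval x} \<subseteq> occurs_in x\<close>]
      by simp
  qed
  then have "length contracted =
      (\<Sum>x\<in>global_symbols. card (occurs_in x - {first_interval x, last_interval x}) + 2)"
    unfolding length_contracted by simp
  also have "\<dots> = (\<Sum>x\<in>global_symbols. card (occurs_in x - {first_interval x, last_interval x}))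
      + 2 * card global_symbols"
    unfolding sum.distrib by simp
  finally show ?thesis
    unfolding set_middle_occurrences using finite_global_symbols finite_occurs_in by simp
qed

(* The distinct middle pairs number at most lambda_s(g, mh) - 2 g <= lambda_s(nh, mh) - 2 nh
   for g global symbols and g <= nh. *)
lemma middle_occurrences_bound:
  assumes s: "3 \<le> s" and noalt: "\<not> has_alternation (s + 2) seq"
    and global: "card global_symbols \<le> nh" and two: "2 \<le> length Bs"
  shows "length (filter is_middle tagged) \<le>
    lambda_s (s - 2) (lambda_s s nh (length Bs) - 2 * nh) (length tagged_blocks)"
proof -
  let ?g = "card global_symbols"
  have "length contracted \<le> lambda_s s ?g (length Bs)"
    using length_le_lambda_s[of contracted ?g s "length Bs"] contracted_blocks
      card_mono[OF finite_global_symbols set_contracted]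
      has_alternation_subseq[OF _ subseq_contracted] noalt by blast
  moreover have "lambda_s s ?g (length Bs) + 2 * (nh - ?g) \<le> lambda_s s nh (length Bs)"
    using lambda_s_add_symbols[OF two, of s ?g "nh - ?g"] s global by simp
  ultimately have card: "card (set (filter is_middle tagged)) \<le> lambda_s s nh (length Bs) - 2 * nh"
    using card_middle_occurrences global by linarith
  have "s - 2 + 2 = s" using s by simp
  then have "\<not> has_alternation (s - 2 + 2) (filter is_middle tagged)"
    using middle_occurrences_alternation[of s] noalt s by auto
  moreover have "at_most_blocks (length tagged_blocks) (filter is_middle tagged)"
    using at_most_blocks_map_filter[OF order.refl, of tagged_blocks id is_middle] distinct_tagged_blocks
    unfolding tagged_def by (simp add: distinct_map)
  ultimately show ?thesis using card by (intro length_le_lambda_s)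
qed

theorem decomposition_bound:
  assumes s: "3 \<le> s" and alphabet: "finite A" "card A = n" "set seq \<subseteq> A"
    and noalt: "\<not> has_alternation (s + 2) seq" and two: "2 \<le> length Bs"
    and m: "(\<Sum>q<length Bs. length (Bs ! q)) = m"
  defines "nh \<equiv> n - (\<Sum>q<length Bs. card (local_symbols q))"
  shows "length seq \<le> (\<Sum>q<length Bs. lambda_s s (card (local_symbols q)) (length (Bs ! q)))
      + 2 * lambda_s (s - 1) nh m + lambda_s (s - 2) (lambda_s s nh (length Bs) - 2 * nh) m"
proof -
  have global: "card global_symbols \<le> nh"
    using global_local_card[OF alphabet(1,3)] alphabet(2) unfolding nh_def by linarith
  have blocks_m: "length tagged_blocks = m" using length_tagged_blocks m by simp
  have "length seq \<le> length (filter is_local tagged) + length (filter is_first tagged)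
      + length (filter is_last tagged) + length (filter is_middle tagged)"
    using length_le_filters4[of tagged] tagged_classified length_tagged by simp
  moreover note local_occurrences_bound[OF noalt]
    end_occurrences_bound[of is_first, OF _ s noalt global]
    end_occurrences_bound[of is_last, OF _ s noalt global]
    middle_occurrences_bound[OF s noalt global two]
  ultimately show ?thesis unfolding blocks_m by simp
qed

end

lemma exists_split_by_lengths:
  "sum_list ls = length xs \<Longrightarrow> \<exists>Is. map length Is = ls \<and> concat Is = xs"
proof (induction ls arbitrary: xs)
  case (Cons l ls)
  then have "sum_list ls = length (drop l xs)" by simp
  then obtain Is where "map length Is = ls" "concat Is = drop l xs" using Cons.IH by blast
  then show ?case using Cons.prems by (intro exI[of _ "take l xs # Is"]) auto
qed simp

lemma exists_superset_card:
  fixes B :: "'a set"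
  assumes "finite B" "card B \<le> n" "infinite (UNIV :: 'a set)"
  obtains A where "finite A" "card A = n" "B \<subseteq> A"
proof -
  obtain C where C: "finite C" "card C = n - card B" "C \<subseteq> UNIV - B"
    using infinite_arbitrarily_large[OF Diff_infinite_finite[OF assms(1,3)]] by blast
  then have "card (B \<union> C) = n" using assms(1,2) by (subst card_Un_disjoint) auto
  then show ?thesis using that C assms(1) by blast
qed

(* The second part: apply the decomposition to an extremal sequence whose blocks are cut
   into intervals of the prescribed sizes. *)
theorem lambda_s_decomposition:
  fixes ms :: "nat \<Rightarrow> nat"
  assumes s: "3 \<le> s" and two: "2 \<le> k" and m: "(\<Sum>q<k. ms q) = m"
  shows "\<exists>nh ncs. length ncs = k \<and> nh + sum_list ncs = n \<and>
    lambda_s s n m \<le> (\<Sum>q<k. lambda_s s (ncs ! q) (ms q))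
      + 2 * lambda_s (s - 1) nh m + lambda_s (s - 2) (lambda_s s nh k - 2 * nh) m"
proof -
  obtain S :: "nat list" where S: "card (set S) \<le> n" "\<not> has_alternation (s + 2) S"
    "at_most_blocks m S" "length S = lambda_s s n m"
    by (rule lambda_s_attained)
  obtain bs where bs: "length bs = m" "concat bs = S" "\<forall>b\<in>set bs. distinct b"
    using at_most_blocks_exactly[OF S(3)] by blast
  obtain Bs where Bs: "map length Bs = map ms [0..<k]" "concat Bs = bs"
    using exists_split_by_lengths[of "map ms [0..<k]" bs] bs(1) m
    by (auto simp: interv_sum_list_conv_sum_set_nat atLeast0LessThan)
  have len: "length Bs = k" using arg_cong[OF Bs(1), of length] by simp
  have len_nth: "length (Bs ! q) = ms q" if "q < k" for q
    using arg_cong[OF Bs(1), of "\<lambda>xs. xs ! q"] that len by simp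
  interpret interval_partition Bs
    using Bs(2) bs(3) by unfold_locales (auto simp: is_block_def)
  obtain A where A: "finite A" "card A = n" "set S \<subseteq> A"
    using exists_superset_card[OF finite_set S(1)] by blast
  define ncs where "ncs = map (\<lambda>q. card (local_symbols q)) [0..<k]"
  have sum_ncs: "sum_list ncs = (\<Sum>q<length Bs. card (local_symbols q))"
    unfolding ncs_def len by (simp add: interv_sum_list_conv_sum_set_nat atLeast0LessThan)
  then have "sum_list ncs \<le> n" using global_local_card[of A] A Bs(2) bs(2) by simp
  moreover have "(\<Sum>q<length Bs. length (Bs ! q)) = m"
    using m len len_nth by simp
  moreover have "(\<Sum>q<length Bs. lambda_s s (card (local_symbols q)) (length (Bs ! q)))
      = (\<Sum>q<k. lambda_s s (ncs ! q) (ms q))"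
    unfolding ncs_def len using len_nth by (intro sum.cong) auto
  ultimately show ?thesis
    using decomposition_bound[OF s A(1,2) _ S(2)[folded bs(2) Bs(2)] two[folded len]]
      A(3) S(4) Bs(2) bs(2) len sum_ncs
    by (intro exI[of _ "n - sum_list ncs"] exI[of _ ncs]) (auto simp: ncs_def)
qed

theorem mainTheorem5:
  fixes s n m :: nat and A :: "'a set" and Bs :: "'a list list list"
  defines "mh \<equiv> length Bs"
  defines "S \<equiv> concat (concat Bs)"
  defines "mq \<equiv> (\<lambda>q. length (Bs ! q))"
  defines "nc \<equiv> (\<lambda>q. card {x. x \<in> set (concat (Bs ! q)) \<and>
                      (\<forall>r<mh. r \<noteq> q \<longrightarrow> x \<notin> set (concat (Bs ! r)))})"
  defines "nh \<equiv> n - (\<Sum>q<mh. nc q)"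
  assumes s3: "s \<ge> 3"
    and alphabet: "finite A" "card A = n" "set S \<subseteq> A"
    and blocks: "\<forall>I\<in>set Bs. \<forall>b\<in>set I. is_block b"
    and mblocks: "(\<Sum>q<mh. mq q) = m"
    and nonempty_intervals: "\<forall>q<mh. mq q \<ge> 1"
    and noalt: "\<not> has_alternation (s + 2) S"
    and mh_bounds: "2 \<le> mh" "mh < m"
  shows "length S \<le> (\<Sum>q<mh. lambda_s s (nc q) (mq q))
           + 2 * lambda_s (s - 1) nh m
           + lambda_s (s - 2) (lambda_s s nh mh - 2 * nh) m
       \<and> (\<exists>nh' :: nat. \<exists>ncs :: nat list. length ncs = mh \<and> nh' + sum_list ncs = n \<and>
           lambda_s s n m \<le> (\<Sum>q<mh. lambda_s s (ncs ! q) (mq q))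
              + 2 * lambda_s (s - 1) nh' m
              + lambda_s (s - 2) (lambda_s s nh' mh - 2 * nh') m)"
proof
  interpret interval_partition Bs
    using blocks by unfold_locales
  have "nc = (\<lambda>q. card (local_symbols q))"
    unfolding nc_def mh_def local_symbols_def interval_def by simp
  then show "length S \<le> (\<Sum>q<mh. lambda_s s (nc q) (mq q))
      + 2 * lambda_s (s - 1) nh m + lambda_s (s - 2) (lambda_s s nh mh - 2 * nh) m"
    using decomposition_bound[OF s3 alphabet[unfolded S_def] noalt[unfolded S_def]
        mh_bounds(1)[unfolded mh_def] mblocks[unfolded mq_def mh_def]]
    unfolding S_def nh_def mh_def mq_def by simp
next
  show "\<exists>nh' ncs. length ncs = mh \<and> nh' + sum_list ncs = n \<and>
      lambda_s s n m \<le> (\<Sum>q<mh. lambda_s s (ncs ! q) (mq q))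
        + 2 * lambda_s (s - 1) nh' m + lambda_s (s - 2) (lambda_s s nh' mh - 2 * nh') m"
    using lambda_s_decomposition[OF s3 mh_bounds(1) mblocks] .
qed

end
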